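(* Let $g\in L^\infty[0,1)$ be such that the limit $g(1):=\lim_{r\to1-0}g(r)$ exists and $g(1)\neq0$, and let $\gamma>0$. Then, as $n\to+\infty$, $$\int_0^1\frac{r^n}{\left(1+\log\frac{1}{1-r}\right)^{\gamma}}\,g(r)\,dr=\frac{g(1)}{n(\log n)^{\gamma}}\,(1+o(1)).$$ *)

theory Defs
  imports "HOL-Analysis.Analysis" "HOL-Library.Landau_Symbols"
begin

end

theory Submission
  imports Defs "HOL-Real_Asymp.Real_Asymp"
begin

(* The weight w(r) = (1 + ln (1/(1-r)))^(-gamma) is decreasing with values in (0,1]. Cutting [0,1)
   at t and bounding w by w(t) on one side gives
     w(t) t^(n+1) / (n+1) <= J_n = int r^n w(r) dr <= t^n + w(t) / (n+1),
   and the cut points t = 1 - 1/(n ln n) and t = 1 - (ln n)^2/n make both bounds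
   ~ 1/(n (ln n)^gamma). Since 0 <= r^n w(r) <= r^n and s^n = o(J_n) for every s < 1, the kernels
   r^n w(r) / J_n concentrate at r = 1, so the integral against g equals J_n (g(1) + o(1)). *)

lemma set_integrable_bounded_Ico:
  fixes f :: "real \<Rightarrow> 'b::{banach, second_countable_topology}"
  assumes "set_borel_measurable lborel {a..<b} f"
    and "AE x in lborel. x \<in> {a..<b} \<longrightarrow> norm (f x) \<le> B"
  shows "set_integrable lborel {a..<b} f"
proof -
  have "set_integrable lborel {a..b} (\<lambda>_. B)"
    unfolding set_integrable_def by (rule borel_integrable_compact) auto
  then have "set_integrable lborel {a..<b} (\<lambda>_. B)"
    by (rule set_integrable_subset) auto
  then show ?thesis
    using assms(1) by (rule set_integrable_bound) (use assms(2) in \<open>auto elim: eventually_mono\<close>)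
qed

lemma set_integrable_scaleR_bounded:
  fixes g :: "real \<Rightarrow> 'b::{banach, second_countable_topology}" and h :: "real \<Rightarrow> real"
  assumes g_meas: "set_borel_measurable lborel {a..<b} g"
    and g_bdd: "AE r in lborel. r \<in> {a..<b} \<longrightarrow> norm (g r) \<le> C"
    and h_meas: "h \<in> borel_measurable borel"
    and h_bdd: "\<And>r. r \<in> {a..<b} \<Longrightarrow> \<bar>h r\<bar> \<le> 1"
  shows "set_integrable lborel {a..<b} (\<lambda>r. h r *\<^sub>R g r)"
proof (rule set_integrable_bounded_Ico)
  have "(\<lambda>r. h r *\<^sub>R (indicator {a..<b} r *\<^sub>R g r)) \<in> borel_measurable lborel"
    using g_meas h_meas unfolding set_borel_measurable_def by measurable
  then show "set_borel_measurable lborel {a..<b} (\<lambda>r. h r *\<^sub>R g r)"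
    unfolding set_borel_measurable_def by (simp add: mult.commute)
  have "norm (h r *\<^sub>R g r) \<le> \<bar>C\<bar>" if "r \<in> {a..<b}" "norm (g r) \<le> C" for r
  proof -
    have "norm (h r *\<^sub>R g r) = \<bar>h r\<bar> * norm (g r)"
      by simp
    also have "\<dots> \<le> 1 * \<bar>C\<bar>"
      using that h_bdd by (intro mult_mono) auto
    finally show ?thesis by simp
  qed
  then show "AE r in lborel. r \<in> {a..<b} \<longrightarrow> norm (h r *\<^sub>R g r) \<le> \<bar>C\<bar>"
    using g_bdd by (auto elim!: eventually_mono)
qed

lemma set_integrable_power_times_bounded:
  fixes w :: "real \<Rightarrow> real"
  assumes "w \<in> borel_measurable borel" and "\<And>r. r \<in> {0..<1} \<Longrightarrow> \<bar>w r\<bar> \<le> 1"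
  shows "set_integrable lborel {0..<1} (\<lambda>r. r ^ n * w r)"
proof (rule set_integrable_bounded_Ico[where B = 1])
  show "set_borel_measurable lborel {0..<1} (\<lambda>r. r ^ n * w r)"
    using assms(1) unfolding set_borel_measurable_def by measurable
  have "\<bar>r ^ n * w r\<bar> \<le> 1" if "r \<in> {0..<1}" for r
    using that assms(2)[OF that] by (auto simp: abs_mult power_abs intro!: mult_le_one power_le_one)
  then show "AE r in lborel. r \<in> {0..<1} \<longrightarrow> norm (r ^ n * w r) \<le> 1"
    by auto
qed

lemma set_integral_indicator_power:
  assumes "0 \<le> t" "t < 1"
  shows "(LINT r:{0..<1}|lborel. indicator {0..t} r * r ^ n) = t ^ Suc n / Suc n"
proof -
  have "(LINT r:{0..<1}|lborel. indicator {0..t} r * r ^ n) = (\<integral>r. r ^ n * indicator {0..t} r \<partial>lborel)"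
    unfolding set_lebesgue_integral_def using assms
    by (intro Bochner_Integration.integral_cong) (auto simp: indicator_def)
  also have "\<dots> = t ^ Suc n / Suc n"
    using assms by (subst integral_power) auto
  finally show ?thesis .
qed

lemma set_integral_power_Ico01: "(LINT r:{0..<1::real}|lborel. r ^ n) = 1 / Suc n"
proof -
  have "(LINT r:{0..<1::real}|lborel. r ^ n) = (LINT r:{0..1::real}|lborel. r ^ n)"
    by (rule set_integral_cong_set[symmetric])
       (auto simp: set_borel_measurable_def intro!: eventually_mono[OF AE_lborel_singleton[of 1]])
  also have "\<dots> = (\<integral>r. r ^ n * indicator {0..1} r \<partial>lborel)"
    unfolding set_lebesgue_integral_def by (simp add: mult.commute)
  also have "\<dots> = 1 / Suc n"
    by (subst integral_power) auto
  finally show ?thesis .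
qed

lemma set_integral_power_weight_lower:
  fixes w :: "real \<Rightarrow> real"
  assumes w_meas: "w \<in> borel_measurable borel"
    and w_anti: "antimono_on {0..<1} w"
    and w_bounds: "\<And>r. r \<in> {0..<1} \<Longrightarrow> 0 \<le> w r \<and> w r \<le> 1"
    and t: "0 \<le> t" "t < 1"
  shows "w t * t ^ Suc n / Suc n \<le> (LINT r:{0..<1}|lborel. r ^ n * w r)"
proof -
  have "w t * t ^ Suc n / Suc n = (LINT r:{0..<1}|lborel. r ^ n * (indicator {0..t} r * w t))"
    using set_integral_indicator_power[OF t, of n] by (simp add: mult.commute mult.left_commute)
  also have "\<dots> \<le> (LINT r:{0..<1}|lborel. r ^ n * w r)"
  proof (rule set_integral_mono)
    show "set_integrable lborel {0..<1} (\<lambda>r. r ^ n * (indicator {0..t} r * w t))"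
      using w_bounds[of t] t by (intro set_integrable_power_times_bounded) (auto simp: indicator_def)
    show "set_integrable lborel {0..<1} (\<lambda>r. r ^ n * w r)"
      using w_meas w_bounds by (intro set_integrable_power_times_bounded) auto
    fix r :: real assume r: "r \<in> {0..<1}"
    show "r ^ n * (indicator {0..t} r * w t) \<le> r ^ n * w r"
    proof (cases "r \<le> t")
      case True
      then have "w t \<le> w r" using monotone_onD[OF w_anti, of r t] r t by auto
      then show ?thesis using True r by (auto intro: mult_left_mono)
    qed (use r w_bounds in auto)
  qed
  finally show ?thesis .
qed

lemma set_integral_power_weight_upper:
  fixes w :: "real \<Rightarrow> real"
  assumes w_meas: "w \<in> borel_measurable borel"
    and w_anti: "antimono_on {0..<1} w"
    and w_bounds: "\<And>r. r \<in> {0..<1} \<Longrightarrow> 0 \<le> w r \<and> w r \<le> 1"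
    and t: "0 \<le> t" "t < 1"
  shows "(LINT r:{0..<1}|lborel. r ^ n * w r) \<le> t ^ n + w t / Suc n"
proof -
  have const_int: "set_integrable lborel {0..<1::real} (\<lambda>_. t ^ n)"
    using t by (intro set_integrable_bounded_Ico[where B = "t ^ n"]) (auto simp: set_borel_measurable_def)
  have power_int: "set_integrable lborel {0..<1} (\<lambda>r. r ^ n * w t)"
    using w_bounds[of t] t by (intro set_integrable_power_times_bounded) auto
  have "(LINT r:{0..<1}|lborel. r ^ n * w r) \<le> (LINT r:{0..<1}|lborel. t ^ n + r ^ n * w t)"
  proof (rule set_integral_mono)
    show "set_integrable lborel {0..<1} (\<lambda>r. r ^ n * w r)"
      using w_meas w_bounds by (intro set_integrable_power_times_bounded) auto
    show "set_integrable lborel {0..<1} (\<lambda>r. t ^ n + r ^ n * w t)"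
      using const_int power_int by (rule set_integral_add)
    fix r :: real assume r: "r \<in> {0..<1}"
    show "r ^ n * w r \<le> t ^ n + r ^ n * w t"
    proof (cases "r \<le> t")
      case True
      have "r ^ n * w r \<le> r ^ n" using w_bounds[OF r] r by (auto intro: mult_left_le)
      also have "\<dots> \<le> t ^ n" using True r by (auto intro: power_mono)
      finally show ?thesis using w_bounds[of t] t r by (auto intro: add_increasing2)
    next
      case False
      then have "w r \<le> w t" using monotone_onD[OF w_anti, of t r] r t by auto
      then have "r ^ n * w r \<le> r ^ n * w t" using r by (intro mult_left_mono) auto
      then show ?thesis using t by (intro add_increasing) auto
    qed
  qed
  also have "\<dots> = t ^ n + w t / Suc n"
    using set_integral_add(2)[OF const_int power_int] set_integral_power_Ico01[of n]
    by (simp add: set_integral_const)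
  finally show ?thesis .
qed

lemma log_weight_ge_one:
  fixes r \<gamma> :: real
  assumes "0 \<le> r" "r < 1" "0 \<le> \<gamma>"
  shows "1 \<le> (1 + ln (1 / (1 - r))) powr \<gamma>"
  using assms by (intro ge_one_powr_ge_zero) (auto simp: field_simps)

lemma log_weight_mono:
  fixes \<gamma> :: real
  assumes "0 \<le> \<gamma>"
  shows "mono_on {0..<1} (\<lambda>r. (1 + ln (1 / (1 - r))) powr \<gamma>)"
proof (rule monotone_onI)
  fix r s :: real assume "r \<in> {0..<1}" "s \<in> {0..<1}" "r \<le> s"
  then have "0 \<le> ln (1 / (1 - r))" and "ln (1 / (1 - r)) \<le> ln (1 / (1 - s))"
    by (auto simp: field_simps)
  then show "(1 + ln (1 / (1 - r))) powr \<gamma> \<le> (1 + ln (1 / (1 - s))) powr \<gamma>"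
    using assms by (intro powr_mono2) auto
qed

lemma log_weight_moment_asymp:
  fixes \<gamma> :: real
  assumes "0 < \<gamma>"
  shows "(\<lambda>n. real n * ln (real n) powr \<gamma> * (LINT r:{0..<1}|lborel. r ^ n / (1 + ln (1 / (1 - r))) powr \<gamma>))
           \<longlonglongrightarrow> 1"
proof (rule tendsto_sandwich)
  define w where "w r = 1 / (1 + ln (1 / (1 - r))) powr \<gamma>" for r :: real
  let ?T = "\<lambda>n::nat. real n * ln (real n) powr \<gamma>"
  let ?J = "\<lambda>n::nat. LINT r:{0..<1}|lborel. r ^ n * w r"
  have J_eq: "(LINT r:{0..<1}|lborel. r ^ n / (1 + ln (1 / (1 - r))) powr \<gamma>) = ?J n" for n
    by (simp add: w_def)
  have w_meas: "w \<in> borel_measurable borel"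
    unfolding w_def by measurable
  have w_bounds: "0 \<le> w r \<and> w r \<le> 1" if "r \<in> {0..<1}" for r
    using log_weight_ge_one[of r \<gamma>] that assms by (auto simp: w_def divide_le_eq_1)
  have w_anti: "antimono_on {0..<1} w"
  proof (rule monotone_onI)
    fix r s :: real assume rs: "r \<in> {0..<1}" "s \<in> {0..<1}" "r \<le> s"
    have "1 \<le> (1 + ln (1 / (1 - r))) powr \<gamma>"
      using log_weight_ge_one rs assms by auto
    moreover have "(1 + ln (1 / (1 - r))) powr \<gamma> \<le> (1 + ln (1 / (1 - s))) powr \<gamma>"
      using monotone_onD[OF log_weight_mono] rs assms by auto
    ultimately show "w s \<le> w r"
      unfolding w_def by (intro divide_left_mono mult_pos_pos) auto
  qed
  \<comment> \<open>At both cut points \<open>ln (1 / (1 - t)) \<sim> ln n\<close>; moreover \<open>t_lo n ^ n \<longrightarrow> 1\<close>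
      and \<open>t_hi n ^ n \<approx> n powr (- ln n)\<close> is negligible against \<open>1 / n\<close>.\<close>
  define t_lo where "t_lo n = 1 - 1 / (real n * ln (real n))" for n :: nat
  define t_hi where "t_hi n = 1 - ln (real n) ^ 2 / real n" for n :: nat
  have lo: "eventually (\<lambda>n. 0 \<le> t_lo n) at_top" "eventually (\<lambda>n. t_lo n < 1) at_top"
    and hi: "eventually (\<lambda>n. 0 \<le> t_hi n) at_top" "eventually (\<lambda>n. t_hi n < 1) at_top"
    unfolding t_lo_def t_hi_def by real_asymp+
  show "eventually (\<lambda>n. ?T n * (w (t_lo n) * t_lo n ^ Suc n / Suc n)
      \<le> ?T n * (LINT r:{0..<1}|lborel. r ^ n / (1 + ln (1 / (1 - r))) powr \<gamma>)) at_top"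
    using lo unfolding J_eq
    by eventually_elim (intro mult_left_mono set_integral_power_weight_lower w_meas w_anti w_bounds, auto)
  show "eventually (\<lambda>n. ?T n * (LINT r:{0..<1}|lborel. r ^ n / (1 + ln (1 / (1 - r))) powr \<gamma>)
      \<le> ?T n * (t_hi n ^ n + w (t_hi n) / Suc n)) at_top"
    using hi unfolding J_eq
    by eventually_elim (intro mult_left_mono set_integral_power_weight_upper w_meas w_anti w_bounds, auto)
  show "(\<lambda>n. ?T n * (w (t_lo n) * t_lo n ^ Suc n / Suc n)) \<longlonglongrightarrow> 1"
    using assms unfolding w_def t_lo_def by real_asymp
  show "(\<lambda>n. ?T n * (t_hi n ^ n + w (t_hi n) / Suc n)) \<longlonglongrightarrow> 1"
    using assms unfolding w_def t_hi_def by real_asymp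
qed

lemma kernel_deviation_split_le:
  fixes x L :: "'a::real_normed_vector" and h r s \<epsilon> M :: real
  assumes h: "0 \<le> h" "h \<le> r ^ n" and "0 \<le> r" "0 \<le> s" "0 \<le> \<epsilon>"
    and far: "norm (x - L) \<le> M"
    and near: "s < r \<Longrightarrow> norm (x - L) \<le> \<epsilon>"
  shows "norm (h *\<^sub>R (x - L)) \<le> \<epsilon> * h + M * s ^ n"
proof (cases "s < r")
  case True
  then have "h * norm (x - L) \<le> h * \<epsilon>"
    using near h by (intro mult_left_mono) auto
  moreover have "0 \<le> M * s ^ n"
    using order_trans[OF norm_ge_zero far] \<open>0 \<le> s\<close> by simp
  ultimately show ?thesis
    using h by (simp add: mult.commute)
next
  case False
  then have "h \<le> s ^ n"
    using h power_mono[of r s n] \<open>0 \<le> r\<close> by auto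
  then have "h * norm (x - L) \<le> s ^ n * M"
    using far h by (intro mult_mono) auto
  moreover have "0 \<le> \<epsilon> * h"
    using \<open>0 \<le> \<epsilon>\<close> h by simp
  ultimately show ?thesis
    using h by (simp add: mult.commute)
qed

lemma kernel_integral_deviation_le:
  fixes g :: "real \<Rightarrow> 'a::{banach, second_countable_topology}" and h :: "real \<Rightarrow> real"
  assumes g_meas: "set_borel_measurable lborel {0..<1} g"
    and g_bdd: "AE r in lborel. r \<in> {0..<1} \<longrightarrow> norm (g r) \<le> C"
    and h_meas: "h \<in> borel_measurable borel"
    and h_nonneg: "\<And>r. r \<in> {0..<1} \<Longrightarrow> 0 \<le> h r"
    and h_le: "\<And>r. r \<in> {0..<1} \<Longrightarrow> h r \<le> r ^ n"
    and s: "0 \<le> s" "s < 1"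
    and near: "\<And>r. s < r \<Longrightarrow> r < 1 \<Longrightarrow> norm (g r - L) \<le> \<epsilon>"
  shows "norm ((LINT r:{0..<1}|lborel. h r *\<^sub>R g r) - (LINT r:{0..<1}|lborel. h r) *\<^sub>R L)
           \<le> \<epsilon> * (LINT r:{0..<1}|lborel. h r) + (\<bar>C\<bar> + norm L) * s ^ n"
proof -
  define M where "M = \<bar>C\<bar> + norm L"
  have "norm (g ((s + 1) / 2) - L) \<le> \<epsilon>"
    using s by (intro near) auto
  then have "0 \<le> \<epsilon>"
    using norm_ge_zero order_trans by blast
  have h_bdd: "\<bar>h r\<bar> \<le> 1" if "r \<in> {0..<1}" for r
    using h_nonneg[OF that] h_le[OF that] power_le_one[of r n] that by auto
  have h_int: "set_integrable lborel {0..<1} h"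
    using h_meas h_bdd
    by (intro set_integrable_bounded_Ico[where B = 1]) (auto simp: set_borel_measurable_def)
  have hg_int: "set_integrable lborel {0..<1} (\<lambda>r. h r *\<^sub>R g r)"
    using g_meas g_bdd h_meas h_bdd by (rule set_integrable_scaleR_bounded)
  have hL_int: "set_integrable lborel {0..<1} (\<lambda>r. h r *\<^sub>R L)"
    using h_meas h_bdd by (intro set_integrable_scaleR_bounded[where C = "norm L"])
      (auto simp: set_borel_measurable_def)
  have hL_eq: "(LINT r:{0..<1}|lborel. h r *\<^sub>R L) = (LINT r:{0..<1}|lborel. h r) *\<^sub>R L"
    using h_int unfolding set_lebesgue_integral_def set_integrable_def
    by (simp add: integral_scaleR_left)
  have const_int: "set_integrable lborel {0..<1::real} (\<lambda>_. M * s ^ n)"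
    using s by (intro set_integrable_bounded_Ico[where B = "M * s ^ n"]) (auto simp: set_borel_measurable_def M_def)
  have dev_int: "set_integrable lborel {0..<1} (\<lambda>r. h r *\<^sub>R (g r - L))"
    using set_integral_diff(1)[OF hg_int hL_int] by (simp add: scaleR_diff_right)
  have "(LINT r:{0..<1}|lborel. h r *\<^sub>R g r) - (LINT r:{0..<1}|lborel. h r) *\<^sub>R L
      = (LINT r:{0..<1}|lborel. h r *\<^sub>R (g r - L))"
    using set_integral_diff(2)[OF hg_int hL_int] hL_eq by (simp add: scaleR_diff_right)
  then have "norm ((LINT r:{0..<1}|lborel. h r *\<^sub>R g r) - (LINT r:{0..<1}|lborel. h r) *\<^sub>R L)
      \<le> (LINT r:{0..<1}|lborel. norm (h r *\<^sub>R (g r - L)))"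
    using set_integral_norm_bound[OF dev_int] by simp
  also have "\<dots> \<le> (LINT r:{0..<1}|lborel. \<epsilon> * h r + M * s ^ n)"
  proof (rule set_integral_mono_AE)
    show "set_integrable lborel {0..<1} (\<lambda>r. norm (h r *\<^sub>R (g r - L)))"
      using dev_int by (rule set_integrable_norm)
    show "set_integrable lborel {0..<1} (\<lambda>r. \<epsilon> * h r + M * s ^ n)"
      by (intro set_integral_add(1) set_integrable_mult_right h_int const_int)
    have far: "norm (g r - L) \<le> M" if "norm (g r) \<le> C" for r
      using norm_triangle_ineq4[of "g r" L] that by (simp add: M_def)
    show "AE r\<in>{0..<1} in lborel. norm (h r *\<^sub>R (g r - L)) \<le> \<epsilon> * h r + M * s ^ n"
      using g_bdd
    proof eventually_elim
      case (elim r)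
      show ?case
        using elim s \<open>0 \<le> \<epsilon>\<close> h_nonneg h_le far near
        by (intro impI kernel_deviation_split_le[where r = r]) auto
    qed
  qed
  also have "\<dots> = \<epsilon> * (LINT r:{0..<1}|lborel. h r) + M * s ^ n"
    by (subst set_integral_add(2)) (auto intro: set_integrable_mult_right h_int const_int simp: set_integral_const)
  finally show ?thesis unfolding M_def .
qed

lemma kernel_integral_normalized_tendsto:
  fixes g :: "real \<Rightarrow> 'a::{banach, second_countable_topology}"
    and h :: "nat \<Rightarrow> real \<Rightarrow> real" and T :: "nat \<Rightarrow> real"
  assumes g_meas: "set_borel_measurable lborel {0..<1} g"
    and g_bdd: "AE r in lborel. r \<in> {0..<1} \<longrightarrow> norm (g r) \<le> C"
    and g_lim: "(g \<longlongrightarrow> L) (at_left 1)"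
    and h_meas: "\<And>n. h n \<in> borel_measurable borel"
    and h_nonneg: "\<And>n r. r \<in> {0..<1} \<Longrightarrow> 0 \<le> h n r"
    and h_le: "\<And>n r. r \<in> {0..<1} \<Longrightarrow> h n r \<le> r ^ n"
    and T_mass: "(\<lambda>n. T n * (LINT r:{0..<1}|lborel. h n r)) \<longlonglongrightarrow> 1"
    and T_geom: "\<And>s. 0 < s \<Longrightarrow> s < 1 \<Longrightarrow> (\<lambda>n. T n * s ^ n) \<longlonglongrightarrow> 0"
  shows "(\<lambda>n. T n *\<^sub>R (LINT r:{0..<1}|lborel. h n r *\<^sub>R g r)) \<longlonglongrightarrow> L"
proof (rule tendstoI)
  fix e :: real assume "0 < e"
  define \<epsilon> where "\<epsilon> = e / 2"
  have "eventually (\<lambda>r. dist (g r) L < \<epsilon>) (at_left 1)"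
    using g_lim \<open>0 < e\<close> by (intro tendstoD) (auto simp: \<epsilon>_def)
  then obtain b where b: "b < 1" "\<And>r. b < r \<Longrightarrow> r < 1 \<Longrightarrow> dist (g r) L < \<epsilon>"
    using eventually_at_left[of 0 "1::real"] by auto
  define s where "s = max b (1 / 2)"
  have s: "0 < s" "s < 1"
    using b by (auto simp: s_def)
  have near: "norm (g r - L) \<le> \<epsilon>" if "s < r" "r < 1" for r
    using b(2)[of r] that by (auto simp: s_def dist_norm)
  define J where "J n = (LINT r:{0..<1}|lborel. h n r)" for n
  define M where "M = \<bar>C\<bar> + norm L"
  define B where "B n = \<epsilon> * \<bar>T n * J n\<bar> + M * \<bar>T n * s ^ n\<bar> + \<bar>T n * J n - 1\<bar> * norm L" for n
  have "B \<longlonglongrightarrow> \<epsilon> * \<bar>1\<bar> + M * \<bar>0\<bar> + \<bar>1 - 1\<bar> * norm L"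
    unfolding B_def J_def by (intro tendsto_intros T_mass T_geom s)
  then have "eventually (\<lambda>n. B n < e) sequentially"
    by (rule order_tendstoD) (use \<open>0 < e\<close> in \<open>simp add: \<epsilon>_def\<close>)
  then show "eventually (\<lambda>n. dist (T n *\<^sub>R (LINT r:{0..<1}|lborel. h n r *\<^sub>R g r)) L < e) sequentially"
  proof eventually_elim
    case (elim n)
    let ?F = "LINT r:{0..<1}|lborel. h n r *\<^sub>R g r"
    have "0 \<le> J n"
      unfolding J_def set_lebesgue_integral_def
      by (intro Bochner_Integration.integral_nonneg) (auto simp: indicator_def h_nonneg)
    have dev: "norm (?F - J n *\<^sub>R L) \<le> \<epsilon> * J n + M * s ^ n"
      unfolding J_def M_def
      using s by (intro kernel_integral_deviation_le[OF g_meas g_bdd h_meas h_nonneg h_le _ _ near]) auto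
    have "T n *\<^sub>R ?F - L = T n *\<^sub>R (?F - J n *\<^sub>R L) + (T n * J n - 1) *\<^sub>R L"
      by (simp add: algebra_simps)
    then have "dist (T n *\<^sub>R ?F) L \<le> \<bar>T n\<bar> * norm (?F - J n *\<^sub>R L) + \<bar>T n * J n - 1\<bar> * norm L"
      unfolding dist_norm by (auto intro: order_trans[OF norm_triangle_ineq])
    also have "\<dots> \<le> \<bar>T n\<bar> * (\<epsilon> * J n + M * s ^ n) + \<bar>T n * J n - 1\<bar> * norm L"
      by (intro add_right_mono mult_left_mono dev) simp
    also have "\<dots> = B n"
      using \<open>0 \<le> J n\<close> \<open>0 < s\<close> by (simp add: B_def abs_mult distrib_left mult_ac)
    finally show ?case using elim by simp
  qed
qed

theorem lemma5p1:
  fixes g :: "real \<Rightarrow> complex" and L :: complex and \<gamma> :: real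
  assumes meas: "set_borel_measurable lborel {0..<1} g"
    and ess_bdd: "\<exists>C. AE r in lborel. r \<in> {0..<1} \<longrightarrow> norm (g r) \<le> C"
    and lim: "(g \<longlongrightarrow> L) (at_left 1)"
    and L_nz: "L \<noteq> 0"
    and gamma_pos: "\<gamma> > 0"
  shows "(\<lambda>n::nat. LINT r:{0..<1}|lborel.
            complex_of_real (r ^ n / (1 + ln (1 / (1 - r))) powr \<gamma>) * g r)
         \<sim>[at_top] (\<lambda>n. L / complex_of_real (real n * (ln (real n)) powr \<gamma>))"
proof -
  define h where "h n r = r ^ n / (1 + ln (1 / (1 - r))) powr \<gamma>" for n :: nat and r :: real
  define T where "T n = real n * ln (real n) powr \<gamma>" for n :: nat
  define F where "F n = (LINT r:{0..<1}|lborel. complex_of_real (h n r) * g r)" for n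
  obtain C where C: "AE r in lborel. r \<in> {0..<1} \<longrightarrow> norm (g r) \<le> C"
    using ess_bdd by blast
  have "(\<lambda>n. T n *\<^sub>R (LINT r:{0..<1}|lborel. h n r *\<^sub>R g r)) \<longlonglongrightarrow> L"
  proof (rule kernel_integral_normalized_tendsto[OF meas C lim])
    show "h n \<in> borel_measurable borel" for n
      unfolding h_def by measurable
    show "0 \<le> h n r" and "h n r \<le> r ^ n" if "r \<in> {0..<1}" for n r
      using log_weight_ge_one[of r \<gamma>] that gamma_pos
      by (auto simp: h_def divide_le_eq mult_le_cancel_left1)
    show "(\<lambda>n. T n * (LINT r:{0..<1}|lborel. h n r)) \<longlonglongrightarrow> 1"
      unfolding T_def h_def by (rule log_weight_moment_asymp[OF gamma_pos])
    show "(\<lambda>n. T n * s ^ n) \<longlonglongrightarrow> 0" if "0 < s" "s < 1" for s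
      using that gamma_pos unfolding T_def by real_asymp
  qed
  then have "(\<lambda>n. complex_of_real (T n) * F n) \<longlonglongrightarrow> L"
    by (simp add: F_def scaleR_conv_of_real)
  from tendsto_divide[OF this tendsto_const L_nz]
  have "(\<lambda>n. complex_of_real (T n) * F n / L) \<longlonglongrightarrow> 1"
    using L_nz by simp
  moreover have "eventually (\<lambda>n. complex_of_real (T n) * F n / L = F n / (L / complex_of_real (T n))) at_top"
    using eventually_gt_at_top[of 1] by eventually_elim (simp add: T_def)
  ultimately have "(\<lambda>n. F n / (L / complex_of_real (T n))) \<longlonglongrightarrow> 1"
    by (rule Lim_transform_eventually)
  then show ?thesis
    unfolding F_def h_def T_def by (rule asymp_equivI')
qed

end
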